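(* Let $F$ be the unique series in $\mathbb{Q}[x,\bar x,y,\bar y][[t]]$ satisfying $(1-St)F=\bar x\bar y-\bar x t[x^0][y^\ge]F-\bar y t[y^0][x^\ge]F$, and set $F_1=[x^<]F+[x^\ge][y^<]F$ and $F_2=[x^\ge][y^\ge]F$ (so $F=F_1+F_2$). Define $$H(x,y,t)=(\bar x-x)\,[\bar x]\Bigl(\bar y\,[y^\le]F_1(x,\bar y,t)-y\,[y^\ge]F_1(x,y,t)\Bigr).$$ Then $$F_2(x,y,t)=\bar x\bar y t\,[x^>][y^>]\frac{H(x,y,t)+H(y,x,t)}{1-St}.$$
   Context: Notation: $\bar x=x^{-1}$, $\bar y=y^{-1}$, $S=x+y+\bar x+\bar y$; series in $\mathbb{Q}[x,\bar x,y,\bar y][[t]]$, with $1/(1-St)$ expanded as a power series in $t$. For $G=\sum c_{i,j,n}x^iy^jt^n$: $[x^0]G=\sum_{j,n}c_{0,j,n}y^jt^n$, $[y^0]G=\sum_{i,n}c_{i,0,n}x^it^n$; $[x^<],[x^\le],[x^\ge],[x^>]$ denote the sums of terms with $x$-exponent $<0$, $\le0$, $\ge0$, $>0$ respectively, analogously for $y$; $[\bar x]G=\sum_{j,n}c_{-1,j,n}y^jt^n$ is the coefficient of $x^{-1}$. *)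

theory Defs
  imports Complex_Main
begin

text \<open>A series G in Q[x,1/x,y,1/y][[t]] is represented by its coefficient function:
  G i j n is the coefficient of x^i y^j t^n.\<close>
type_synonym series = "int \<Rightarrow> int \<Rightarrow> nat \<Rightarrow> rat"

definition is_series :: "series \<Rightarrow> bool" where
  "is_series G \<longleftrightarrow> (\<forall>n. finite {(i, j). G i j n \<noteq> 0})"

definition sadd :: "series \<Rightarrow> series \<Rightarrow> series" where
  "sadd F G = (\<lambda>i j n. F i j n + G i j n)"

definition ssub :: "series \<Rightarrow> series \<Rightarrow> series" where
  "ssub F G = (\<lambda>i j n. F i j n - G i j n)"

definition smono :: "int \<Rightarrow> int \<Rightarrow> nat \<Rightarrow> series \<Rightarrow> series" where
  "smono a b k G = (\<lambda>i j n. if k \<le> n then G (i - a) (j - b) (n - k) else 0)"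

definition smonomial :: "int \<Rightarrow> int \<Rightarrow> nat \<Rightarrow> series" where
  "smonomial a b k = (\<lambda>i j n. if i = a \<and> j = b \<and> n = k then 1 else 0)"

definition smulS :: "series \<Rightarrow> series" where
  "smulS G = sadd (sadd (smono 1 0 0 G) (smono (-1) 0 0 G)) (sadd (smono 0 1 0 G) (smono 0 (-1) 0 G))"

definition smul_1mSt :: "series \<Rightarrow> series" where
  "smul_1mSt G = ssub G (smono 0 0 1 (smulS G))"

text \<open>Division by 1 - S t, i.e. multiplication by the power series 1/(1-St) = sum_k S^k t^k:
  R = G + S t R, solved coefficientwise by recursion on the t-degree.\<close>
fun sdiv_1mSt :: "series \<Rightarrow> series" where
  "sdiv_1mSt G i j 0 = G i j 0"
| "sdiv_1mSt G i j (Suc n) = G i j (Suc n)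
     + sdiv_1mSt G (i - 1) j n + sdiv_1mSt G (i + 1) j n
     + sdiv_1mSt G i (j - 1) n + sdiv_1mSt G i (j + 1) n"

text \<open>Extraction of the terms whose x-exponent (resp. y-exponent) satisfies P;
  e.g. [x^<] is sproj_x (\<lambda>i. i < 0), [x^0] is sproj_x (\<lambda>i. i = 0).\<close>
definition sproj_x :: "(int \<Rightarrow> bool) \<Rightarrow> series \<Rightarrow> series" where
  "sproj_x P G = (\<lambda>i j n. if P i then G i j n else 0)"

definition sproj_y :: "(int \<Rightarrow> bool) \<Rightarrow> series \<Rightarrow> series" where
  "sproj_y P G = (\<lambda>i j n. if P j then G i j n else 0)"

text \<open>[x^{-1}] G: the coefficient of x^{-1}, a series in y and t.\<close>
definition scoeff_xbar :: "series \<Rightarrow> series" where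
  "scoeff_xbar G = (\<lambda>i j n. if i = 0 then G (-1) j n else 0)"

definition ssubst_ybar :: "series \<Rightarrow> series" where
  "ssubst_ybar G = (\<lambda>i j n. G i (-j) n)"

definition sswap :: "series \<Rightarrow> series" where
  "sswap G = (\<lambda>i j n. G j i n)"

end

theory Submission
  imports Defs
begin

text \<open>On the quadrant i, j \<ge> 0 the coefficients of F obey the free recurrence of
  1/(1 - S t), except that the terms coming from outside the quadrant, on the lines
  i = -1 and j = -1, act as sources. Extending these sources oddly in x and in
  y gives a series G with G(1/x, y) = -G(x, y) = G(x, 1/y), so
  G/(1 - S t) vanishes on both axes and thus satisfies the same recurrence with the same
  boundary behaviour as the shifted quadrant part of F. Since F is symmetric in x and y, the sources
  on the line j = -1 are the mirror image of those on i = -1, which is why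
  H(x,y) + H(y,x) appears.\<close>

lemma sdiv_1mSt_odd_x:
  assumes "\<And>i j n. G (-i) j n = - G i j n"
  shows "sdiv_1mSt G (-i) j n = - sdiv_1mSt G i j n"
proof (induction n arbitrary: i j)
  case 0 then show ?case using assms by simp
next
  case (Suc n)
  have reflect: "-i - 1 = -(i + 1)" "-i + 1 = -(i - 1)" by simp_all
  have "sdiv_1mSt G (-i - 1) j n = - sdiv_1mSt G (i + 1) j n"
    and "sdiv_1mSt G (-i + 1) j n = - sdiv_1mSt G (i - 1) j n"
    unfolding reflect by (rule Suc)+
  then show ?case using Suc[of i "j - 1"] Suc[of i "j + 1"] assms[of i j "Suc n"] by simp
qed

lemma sdiv_1mSt_odd_y:
  assumes "\<And>i j n. G i (-j) n = - G i j n"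
  shows "sdiv_1mSt G i (-j) n = - sdiv_1mSt G i j n"
proof (induction n arbitrary: i j)
  case 0 then show ?case using assms by simp
next
  case (Suc n)
  have reflect: "-j - 1 = -(j + 1)" "-j + 1 = -(j - 1)" by simp_all
  have "sdiv_1mSt G i (-j - 1) n = - sdiv_1mSt G i (j + 1) n"
    and "sdiv_1mSt G i (-j + 1) n = - sdiv_1mSt G i (j - 1) n"
    unfolding reflect by (rule Suc)+
  then show ?case using Suc[of "i - 1" j] Suc[of "i + 1" j] assms[of i j "Suc n"] by simp
qed

definition kernel_rhs :: "series \<Rightarrow> series" where
  "kernel_rhs F =
     ssub (ssub (smonomial (-1) (-1) 0)
                (smono (-1) 0 1 (sproj_x (\<lambda>i. i = 0) (sproj_y (\<lambda>j. j \<ge> 0) F))))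
          (smono 0 (-1) 1 (sproj_y (\<lambda>j. j = 0) (sproj_x (\<lambda>i. i \<ge> 0) F)))"

lemma kernel_eq_coeff_0:
  assumes "smul_1mSt F = kernel_rhs F"
  shows "F i j 0 = (if i = -1 \<and> j = -1 then 1 else 0)"
  using fun_cong[OF fun_cong[OF fun_cong[OF assms, of i], of j], of 0]
  by (simp add: kernel_rhs_def smul_1mSt_def ssub_def smono_def smonomial_def)

lemma kernel_eq_coeff_Suc:
  assumes "smul_1mSt F = kernel_rhs F"
  shows "F i j (Suc n) = F (i - 1) j n + F (i + 1) j n + F i (j - 1) n + F i (j + 1) n
           - (if i = -1 \<and> j \<ge> 0 then F 0 j n else 0)
           - (if j = -1 \<and> i \<ge> 0 then F i 0 n else 0)"
  using fun_cong[OF fun_cong[OF fun_cong[OF assms, of i], of j], of "Suc n"]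
  by (cases "i = -1"; cases "j = -1")
     (auto simp add: kernel_rhs_def smul_1mSt_def ssub_def smono_def smonomial_def smulS_def
        sadd_def sproj_x_def sproj_y_def algebra_simps)

lemma kernel_eq_symmetric:
  assumes "smul_1mSt F = kernel_rhs F"
  shows "F i j n = F j i n"
proof (induction n arbitrary: i j)
  case 0 then show ?case by (simp add: kernel_eq_coeff_0[OF assms])
next
  case (Suc n)
  show ?case
    unfolding kernel_eq_coeff_Suc[OF assms, of i j n] kernel_eq_coeff_Suc[OF assms, of j i n]
    using Suc[of "i - 1" j] Suc[of "i + 1" j] Suc[of i "j - 1"] Suc[of i "j + 1"]
      Suc[of 0 j] Suc[of i 0] by auto
qed

lemma kernel_eq_quadrant_eq_sdiv_1mSt:
  assumes F_eq: "smul_1mSt F = kernel_rhs F"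
    and G_odd_x: "\<And>i j n. G (-i) j n = - G i j n"
    and G_odd_y: "\<And>i j n. G i (-j) n = - G i j n"
    and G_sources: "\<And>i j n. i \<ge> 0 \<Longrightarrow> j \<ge> 0 \<Longrightarrow>
          G (i + 1) (j + 1) n = (if i = 0 then F (-1) j n else 0) + (if j = 0 then F i (-1) n else 0)"
    and "i \<ge> 0" "j \<ge> 0"
  shows "F i j (Suc n) = sdiv_1mSt G (i + 1) (j + 1) n"
  using \<open>i \<ge> 0\<close> \<open>j \<ge> 0\<close>
proof (induction n arbitrary: i j)
  case 0
  then show ?case
    using G_sources[of i j 0]
    by (simp add: kernel_eq_coeff_Suc[OF F_eq] kernel_eq_coeff_0[OF F_eq])
next
  case (Suc n)
  let ?R = "sdiv_1mSt G"
  have R_axis_x: "?R 0 j' n = 0" for j'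
    using sdiv_1mSt_odd_x[of G 0 j' n, OF G_odd_x] by simp
  have R_axis_y: "?R i' 0 n = 0" for i'
    using sdiv_1mSt_odd_y[of G i' 0 n, OF G_odd_y] by simp
  have right: "F (i + 1) j (Suc n) = ?R (i + 2) (j + 1) n"
    using Suc.IH[of "i + 1" j] Suc.prems by (simp add: add.assoc)
  have up: "F i (j + 1) (Suc n) = ?R (i + 1) (j + 2) n"
    using Suc.IH[of i "j + 1"] Suc.prems by (simp add: add.assoc)
  have left: "(if i = 0 then F (-1) j (Suc n) else 0) + ?R i (j + 1) n = F (i - 1) j (Suc n)"
    using Suc.IH[of "i - 1" j] Suc.prems R_axis_x by (cases "i = 0") simp_all
  have down: "(if j = 0 then F i (-1) (Suc n) else 0) + ?R (i + 1) j n = F i (j - 1) (Suc n)"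
    using Suc.IH[of i "j - 1"] Suc.prems R_axis_y by (cases "j = 0") simp_all
  have "?R (i + 1) (j + 1) (Suc n) = G (i + 1) (j + 1) (Suc n) + ?R i (j + 1) n
      + ?R (i + 2) (j + 1) n + ?R (i + 1) j n + ?R (i + 1) (j + 2) n"
    by (simp add: algebra_simps)
  also have "\<dots> = F (i - 1) j (Suc n) + F (i + 1) j (Suc n) + F i (j - 1) (Suc n)
      + F i (j + 1) (Suc n)"
    using G_sources[of i j "Suc n"] Suc.prems right up left down by simp
  also have "\<dots> = F i j (Suc (Suc n))"
    using kernel_eq_coeff_Suc[OF F_eq, of i j "Suc n"] Suc.prems by simp
  finally show ?case by simp
qed

text \<open>The coefficient of x^0 y^j t^n in the series K of the theorem:
  the odd extension in j of j \<mapsto> - F(-1, j - 1, n), j \<ge> 1.\<close>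
definition odd_boundary :: "series \<Rightarrow> int \<Rightarrow> nat \<Rightarrow> rat" where
  "odd_boundary F j n =
     (if j \<le> -1 then F (-1) (-j - 1) n else 0) - (if j \<ge> 1 then F (-1) (j - 1) n else 0)"

definition boundary_sources :: "series \<Rightarrow> series" where
  "boundary_sources F i j n =
     (if i = -1 then odd_boundary F j n else 0) - (if i = 1 then odd_boundary F j n else 0)
     + (if j = -1 then odd_boundary F i n else 0) - (if j = 1 then odd_boundary F i n else 0)"

lemma odd_boundary_neg: "odd_boundary F (-j) n = - odd_boundary F j n"
  unfolding odd_boundary_def by auto

lemma boundary_sources_odd_x: "boundary_sources F (-i) j n = - boundary_sources F i j n"
  unfolding boundary_sources_def using odd_boundary_neg by auto

lemma boundary_sources_odd_y: "boundary_sources F i (-j) n = - boundary_sources F i j n"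
  unfolding boundary_sources_def using odd_boundary_neg by auto

lemma boundary_sources_quadrant:
  assumes "\<And>i j n. F i j n = F j i n" and "i \<ge> 0" "j \<ge> 0"
  shows "boundary_sources F (i + 1) (j + 1) n
           = (if i = 0 then F (-1) j n else 0) + (if j = 0 then F i (-1) n else 0)"
  using assms(2,3) assms(1)[of i "-1" n] unfolding boundary_sources_def odd_boundary_def by auto

lemma reflected_kernel_eq_boundary_sources:
  assumes F1_def: "F1 = sadd (sproj_x (\<lambda>i. i < 0) F) (sproj_x (\<lambda>i. i \<ge> 0) (sproj_y (\<lambda>j. j < 0) F))"
    and H_def: "H = ssub (smono (-1) 0 0 K) (smono 1 0 0 K)"
    and K_def: "K = scoeff_xbar (ssub (smono 0 (-1) 0 (sproj_y (\<lambda>j. j \<le> 0) (ssubst_ybar F1)))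
                                    (smono 0 1 0 (sproj_y (\<lambda>j. j \<ge> 0) F1)))"
  shows "sadd H (sswap H) = boundary_sources F"
proof -
  have K_coeff: "K i j n = (if i = 0 then odd_boundary F j n else 0)" for i j n
    unfolding K_def F1_def odd_boundary_def
    by (auto simp add: scoeff_xbar_def ssub_def smono_def sproj_y_def ssubst_ybar_def sadd_def
        sproj_x_def)
  show ?thesis
    by (intro ext) (simp add: H_def sadd_def sswap_def ssub_def smono_def K_coeff
        boundary_sources_def)
qed

theorem mainTheorem8:
  fixes F F1 F2 H K :: series
  assumes F_series: "is_series F"
    and F_eq: "smul_1mSt F =
       ssub (ssub (smonomial (-1) (-1) 0)
                  (smono (-1) 0 1 (sproj_x (\<lambda>i. i = 0) (sproj_y (\<lambda>j. j \<ge> 0) F))))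
            (smono 0 (-1) 1 (sproj_y (\<lambda>j. j = 0) (sproj_x (\<lambda>i. i \<ge> 0) F)))"
    and F1_def: "F1 = sadd (sproj_x (\<lambda>i. i < 0) F) (sproj_x (\<lambda>i. i \<ge> 0) (sproj_y (\<lambda>j. j < 0) F))"
    and F2_def: "F2 = sproj_x (\<lambda>i. i \<ge> 0) (sproj_y (\<lambda>j. j \<ge> 0) F)"
    and H_def: "H = ssub (smono (-1) 0 0 K) (smono 1 0 0 K)"
    and K_def: "K = scoeff_xbar (ssub (smono 0 (-1) 0 (sproj_y (\<lambda>j. j \<le> 0) (ssubst_ybar F1)))
                                    (smono 0 1 0 (sproj_y (\<lambda>j. j \<ge> 0) F1)))"
  shows "F2 = smono (-1) (-1) 1
                (sproj_x (\<lambda>i. i > 0) (sproj_y (\<lambda>j. j > 0) (sdiv_1mSt (sadd H (sswap H)))))"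
proof (intro ext)
  fix i j n
  have kernel_eq: "smul_1mSt F = kernel_rhs F"
    using F_eq unfolding kernel_rhs_def .
  have symmetric: "\<And>i j n. F i j n = F j i n"
    by (rule kernel_eq_symmetric[OF kernel_eq])
  have sources: "boundary_sources F (i' + 1) (j' + 1) m
      = (if i' = 0 then F (-1) j' m else 0) + (if j' = 0 then F i' (-1) m else 0)"
    if "i' \<ge> 0" "j' \<ge> 0" for i' j' m
    using boundary_sources_quadrant[of F] symmetric that by blast
  have quadrant: "F i' j' (Suc m) = sdiv_1mSt (sadd H (sswap H)) (i' + 1) (j' + 1) m"
    if "i' \<ge> 0" "j' \<ge> 0" for i' j' m
    unfolding reflected_kernel_eq_boundary_sources[OF F1_def H_def K_def]
    using kernel_eq boundary_sources_odd_x boundary_sources_odd_y sources that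
    by (rule kernel_eq_quadrant_eq_sdiv_1mSt)
  show "F2 i j n = smono (-1) (-1) 1
          (sproj_x (\<lambda>i. i > 0) (sproj_y (\<lambda>j. j > 0) (sdiv_1mSt (sadd H (sswap H))))) i j n"
  proof (cases n)
    case 0
    then show ?thesis
      by (auto simp: F2_def sproj_x_def sproj_y_def smono_def kernel_eq_coeff_0[OF kernel_eq])
  next
    case (Suc m)
    then show ?thesis
      using quadrant[of i j m] by (auto simp: F2_def sproj_x_def sproj_y_def smono_def)
  qed
qed

end
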